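(* Let $h>0$, assume $g$ satisfies (H), fix $c>0$, and let $\phi,\psi$ be two wavefront profiles of (1) with velocity $c$. Suppose that, as $t\to-\infty$, $\phi(t)=a(-t)^m e^{\lambda t}(1+o(1))$ and $\psi(t)=b(-t)^n e^{\mu t}(1+o(1))$ with $a,b>0$, $\lambda,\mu>0$ and $m,n\in\{0,1\}$. Then $\lambda=\mu$ and $m=n$.
   Context: Hypothesis (H): $g:\mathbb{R}_+\to\mathbb{R}_+$ is continuous and strictly increasing; $g(x)=x$ has exactly two nonnegative solutions $0$ and $\kappa>0$; $g$ is differentiable at $0,\kappa$ with $g'(0)>1$, $g'(\kappa)<1$; $g$ is $C^1$ near $\kappa$; and $|g(u)/u-g'(0)|\le Cu^\theta$ for $u\in(0,\delta]$ for some $C>0,\theta\in(0,1],\delta>0$. A wavefront profile with velocity $c$ is a $C^2$, positive, bounded, monotone $\phi:\mathbb{R}\to\mathbb{R}$ with $\phi(-\infty)=0$, $\phi(+\infty)=\kappa$ and $\phi''(s)-c\phi'(s)-\phi(s)+g(\phi(s-ch))=0$, $s\in\mathbb{R}$. *)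

theory Defs
  imports "HOL-Analysis.Analysis"
begin

text \<open>Hypothesis (H) on g : R_+ -> R_+ (only the values on [0,inf) matter).
  g0 = g'(0), gk = g'(kappa); derivatives at 0 are one-sided (within [0,inf)).\<close>
definition hypH :: "(real \<Rightarrow> real) \<Rightarrow> real \<Rightarrow> bool" where
  "hypH g \<kappa> \<longleftrightarrow>
     \<kappa> > 0 \<and>
     (\<forall>x\<ge>0. g x \<ge> 0) \<and>
     continuous_on {0..} g \<and>
     strict_mono_on {0..} g \<and>
     {x. x \<ge> 0 \<and> g x = x} = {0, \<kappa>} \<and>
     (\<exists>g0 gk. (g has_real_derivative g0) (at 0 within {0..}) \<and>
              (g has_real_derivative gk) (at \<kappa> within {0..}) \<and>
              g0 > 1 \<and> gk < 1 \<and>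
              (\<exists>C \<theta> \<delta>. C > 0 \<and> 0 < \<theta> \<and> \<theta> \<le> 1 \<and> \<delta> > 0 \<and>
                 (\<forall>u. 0 < u \<and> u \<le> \<delta> \<longrightarrow> \<bar>g u / u - g0\<bar> \<le> C * u powr \<theta>))) \<and>
     (\<exists>r>0. r < \<kappa> \<and> g differentiable_on ball \<kappa> r \<and> continuous_on (ball \<kappa> r) (deriv g))"

definition wavefront :: "(real \<Rightarrow> real) \<Rightarrow> real \<Rightarrow> real \<Rightarrow> real \<Rightarrow> (real \<Rightarrow> real) \<Rightarrow> bool" where
  "wavefront g \<kappa> h c \<phi> \<longleftrightarrow>
     (\<exists>\<phi>' \<phi>''. (\<forall>s. (\<phi> has_real_derivative \<phi>' s) (at s)) \<and>
               (\<forall>s. (\<phi>' has_real_derivative \<phi>'' s) (at s)) \<and>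
               continuous_on UNIV \<phi>'' \<and>
               (\<forall>s. \<phi>'' s - c * \<phi>' s - \<phi> s + g (\<phi> (s - c * h)) = 0)) \<and>
     (\<forall>s. \<phi> s > 0) \<and> bounded (range \<phi>) \<and> (mono \<phi> \<or> antimono \<phi>) \<and>
     (\<phi> \<longlongrightarrow> 0) at_bot \<and> (\<phi> \<longlongrightarrow> \<kappa>) at_top"

end

theory Submission
  imports Defs "HOL-Real_Asymp.Real_Asymp"
begin

(* Suppose one profile decays strictly faster than the other, i.e. (after possibly swapping them)
   \<psi>(t)/\<phi>(t+\<tau>) \<rightarrow> 0 as t \<rightarrow> -\<infinity> for every shift \<tau>.  A sliding argument shows this is impossible:
   the set of shifts \<tau> with \<psi> \<le> \<phi>(\<cdot>+\<tau>) on all of \<real> is nonempty, closed and bounded below, so it has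
   a least element \<tau>*.  At \<tau>* the ordering is strict everywhere, because a contact point of two
   ordered solutions propagates backwards in steps of c h (strong comparison principle), contradicting
   strict ordering near -\<infinity>.  A compactness argument then lets us slide a little further, contradicting
   minimality.  Near +\<infinity> the ordering is preserved automatically since g is a contraction near \<kappa>. *)

definition delay_solution :: "(real \<Rightarrow> real) \<Rightarrow> real \<Rightarrow> real \<Rightarrow> (real \<Rightarrow> real) \<Rightarrow> bool" where
  "delay_solution g c h u \<longleftrightarrow> (\<exists>u' u''. (\<forall>s. (u has_real_derivative u' s) (at s)) \<and>
     (\<forall>s. (u' has_real_derivative u'' s) (at s)) \<and>
     (\<forall>s. u'' s - c * u' s - u s + g (u (s - c * h)) = 0))"

lemma delay_solution_continuous:
  assumes "delay_solution g c h u"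
  shows "continuous_on UNIV u"
proof -
  obtain u' where "\<And>s. (u has_real_derivative u' s) (at s)"
    using assms unfolding delay_solution_def by blast
  then show ?thesis by (intro continuous_at_imp_continuous_on) (auto intro: DERIV_isCont)
qed

lemma delay_solution_shift:
  assumes "delay_solution g c h u"
  shows "delay_solution g c h (\<lambda>t. u (t + \<tau>))"
proof -
  obtain u' u'' where U: "\<And>s. (u has_real_derivative u' s) (at s)"
    "\<And>s. (u' has_real_derivative u'' s) (at s)"
    "\<And>s. u'' s - c * u' s - u s + g (u (s - c * h)) = 0"
    using assms unfolding delay_solution_def by blast
  have d1: "((\<lambda>t. u (t + \<tau>)) has_real_derivative u' (s + \<tau>)) (at s)" for s
    using U(1)[of "s + \<tau>"] by (simp add: DERIV_shift)
  have d2: "((\<lambda>s. u' (s + \<tau>)) has_real_derivative u'' (s + \<tau>)) (at s)" for s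
    using U(2)[of "s + \<tau>"] by (simp add: DERIV_shift)
  have eq: "u'' (s + \<tau>) - c * u' (s + \<tau>) - u (s + \<tau>) + g (u (s - c * h + \<tau>)) = 0" for s
    using U(3)[of "s + \<tau>"] by (simp add: diff_add_eq)
  show ?thesis unfolding delay_solution_def
    by (intro exI[of _ "\<lambda>s. u' (s + \<tau>)"] exI[of _ "\<lambda>s. u'' (s + \<tau>)"] conjI allI d1 d2 eq)
qed

lemma delay_solution_fixed_point:
  assumes "g k = k"
  shows "delay_solution g c h (\<lambda>_. k)"
  unfolding delay_solution_def by (intro exI[of _ "\<lambda>_. 0"] conjI allI) (auto simp: assms)

lemma global_max_derivatives:
  fixes w w' w'' :: "real \<Rightarrow> real"
  assumes D1: "\<And>s. (w has_real_derivative w' s) (at s)"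
    and D2: "\<And>s. (w' has_real_derivative w'' s) (at s)"
    and max: "\<And>t. w t \<le> w t0"
  shows "w' t0 = 0 \<and> w'' t0 \<le> 0"
proof
  show w'0: "w' t0 = 0"
    by (rule DERIV_local_max[OF D1, of 1]) (auto simp: max)
  show "w'' t0 \<le> 0"
  proof (rule ccontr)
    assume "\<not> w'' t0 \<le> 0"
    then have "w'' t0 > 0" by simp
    then obtain d where d: "d > 0" "\<And>h. h > 0 \<Longrightarrow> h < d \<Longrightarrow> w' t0 < w' (t0 + h)"
      using DERIV_pos_inc_right[OF D2] by blast
    have "t0 < t0 + d/2" using d by simp
    from MVT2[OF this, of w w'] D1 obtain z where z: "t0 < z" "z < t0 + d/2"
      "w (t0 + d/2) - w t0 = (t0 + d/2 - t0) * w' z" by blast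
    have "w' t0 < w' (t0 + (z - t0))" using d z by (intro d(2)) auto
    then have "w' z > 0" using w'0 by simp
    then have "(t0 + d/2 - t0) * w' z > 0" using d by simp
    then have "w (t0 + d/2) > w t0" using z(3) by linarith
    with max[of "t0 + d/2"] show False by simp
  qed
qed

lemma difference_at_global_max:
  assumes su: "delay_solution g c h u" and sv: "delay_solution g c h v"
    and max: "\<And>t. u t - v t \<le> u t0 - v t0"
  shows "u t0 - v t0 \<le> g (u (t0 - c * h)) - g (v (t0 - c * h))"
proof -
  obtain u' u'' where U: "\<And>s. (u has_real_derivative u' s) (at s)"
    "\<And>s. (u' has_real_derivative u'' s) (at s)"
    "\<And>s. u'' s - c * u' s - u s + g (u (s - c * h)) = 0"
    using su unfolding delay_solution_def by blast
  obtain v' v'' where V: "\<And>s. (v has_real_derivative v' s) (at s)"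
    "\<And>s. (v' has_real_derivative v'' s) (at s)"
    "\<And>s. v'' s - c * v' s - v s + g (v (s - c * h)) = 0"
    using sv unfolding delay_solution_def by blast
  have "(\<lambda>s. u' s - v' s) t0 = 0 \<and> (\<lambda>s. u'' s - v'' s) t0 \<le> 0"
    by (rule global_max_derivatives[where w = "\<lambda>s. u s - v s"])
      (auto intro!: DERIV_diff U V max)
  then show ?thesis using U(3)[of t0] V(3)[of t0] by simp
qed

lemma touch_propagates_backward:
  assumes su: "delay_solution g c h u" and sv: "delay_solution g c h v"
    and sm: "strict_mono_on {0..} g"
    and u0: "\<And>t. 0 \<le> u t" and v0: "\<And>t. 0 \<le> v t" and le: "\<And>t. u t \<le> v t"
    and eq: "u t0 = v t0"
  shows "u (t0 - c * h) = v (t0 - c * h)"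
proof (rule ccontr)
  assume "u (t0 - c * h) \<noteq> v (t0 - c * h)"
  then have "u (t0 - c * h) < v (t0 - c * h)" using le[of "t0 - c * h"] by simp
  then have "g (u (t0 - c * h)) < g (v (t0 - c * h))"
    using u0 v0 by (intro strict_mono_onD[OF sm]) auto
  moreover have "0 \<le> g (u (t0 - c * h)) - g (v (t0 - c * h))"
    using difference_at_global_max[OF su sv, of t0] le eq by simp
  ultimately show False by simp
qed

text \<open>Strong comparison principle: ordered nonnegative solutions that are strictly ordered near
  \<open>-\<infinity>\<close> are strictly ordered everywhere (iterate the backward propagation of a contact point).\<close>

lemma strict_comparison:
  assumes su: "delay_solution g c h u" and sv: "delay_solution g c h v"
    and sm: "strict_mono_on {0..} g" and ch: "c * h > 0"
    and u0: "\<And>t. 0 \<le> u t" and v0: "\<And>t. 0 \<le> v t" and le: "\<And>t. u t \<le> v t"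
    and left: "\<And>t. t \<le> B \<Longrightarrow> u t < v t"
  shows "u t < v t"
proof (rule ccontr)
  assume "\<not> u t < v t"
  then have eq: "u t = v t" using le[of t] by simp
  have touch: "u (t - real k * (c * h)) = v (t - real k * (c * h))" for k :: nat
  proof (induction k)
    case 0
    then show ?case using eq by simp
  next
    case (Suc k)
    have "u (t - real k * (c * h) - c * h) = v (t - real k * (c * h) - c * h)"
      by (rule touch_propagates_backward[OF su sv sm u0 v0 le Suc])
    then show ?case by (simp add: algebra_simps)
  qed
  obtain k :: nat where "(t - B) / (c * h) < real k" using reals_Archimedean2 by blast
  then have "t - real k * (c * h) \<le> B" using ch by (simp add: divide_less_eq)
  then show False using left touch[of k] by force
qed

lemma attains_global_max:
  fixes w :: "real \<Rightarrow> real"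
  assumes cont: "continuous_on UNIV w" and pos: "w t > 0"
    and left: "\<And>s. s \<le> T \<Longrightarrow> w s \<le> 0" and lim: "(w \<longlongrightarrow> 0) at_top"
  obtains t0 where "t0 \<ge> T" "\<And>s. w s \<le> w t0"
proof -
  have tT: "T < t" using left[of t] pos by force
  have "eventually (\<lambda>s. w s < w t) at_top" using lim pos by (rule order_tendstoD)
  then obtain T2 where T2: "\<And>s. s \<ge> T2 \<Longrightarrow> w s < w t"
    by (auto simp: eventually_at_top_linorder)
  have "{T..max T2 t} \<noteq> {}" using tT by auto
  then obtain t0 where t0: "t0 \<in> {T..max T2 t}" "\<And>s. s \<in> {T..max T2 t} \<Longrightarrow> w s \<le> w t0"
    using continuous_attains_sup[OF compact_Icc _ continuous_on_subset[OF cont]] by blast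
  have wt: "w t \<le> w t0" using t0(2)[of t] tT by auto
  have "w s \<le> w t0" for s
  proof -
    consider "s < T" | "s \<in> {T..max T2 t}" | "T2 \<le> s" by fastforce
    then show ?thesis
      by cases (use left[of s] pos wt t0(2)[of s] T2[of s] in auto)
  qed
  with t0(1) show ?thesis by (intro that) auto
qed

lemma tail_comparison:
  assumes su: "delay_solution g c h u" and sv: "delay_solution g c h v"
    and sm: "strict_mono_on {0..} g" and L: "0 \<le> L" "L < 1" and lo: "0 \<le> lo"
    and contraction: "\<And>x y. lo \<le> y \<Longrightarrow> y \<le> x \<Longrightarrow> x \<le> k \<Longrightarrow> g x - g y \<le> L * (x - y)"
    and zone: "\<And>t. t \<ge> T - c * h \<Longrightarrow> lo \<le> u t \<and> u t \<le> k \<and> lo \<le> v t \<and> v t \<le> k"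
    and le: "\<And>t. t \<le> T \<Longrightarrow> u t \<le> v t"
    and lim: "((\<lambda>t. u t - v t) \<longlongrightarrow> 0) at_top"
  shows "u t \<le> v t"
proof (rule ccontr)
  assume "\<not> u t \<le> v t"
  then have pos: "u t - v t > 0" by simp
  have cont: "continuous_on UNIV (\<lambda>t. u t - v t)"
    using delay_solution_continuous[OF su] delay_solution_continuous[OF sv]
    by (intro continuous_intros)
  have left: "u s - v s \<le> 0" if "s \<le> T" for s using le[OF that] by simp
  obtain t0 where t0: "t0 \<ge> T" and max: "\<And>s. u s - v s \<le> u t0 - v t0"
    using attains_global_max[OF cont pos left lim] by blast
  define s where "s = t0 - c * h"
  have gap: "u t0 - v t0 \<le> g (u s) - g (v s)"
    unfolding s_def by (rule difference_at_global_max[OF su sv max])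
  have gap_pos: "u t0 - v t0 > 0" using max[of t] pos by simp
  have zs: "lo \<le> u s" "u s \<le> k" "lo \<le> v s" "v s \<le> k" using zone[of s] t0 by (auto simp: s_def)
  show False
  proof (cases "u s \<le> v s")
    case True
    then have "g (u s) \<le> g (v s)" using zs lo by (intro strict_mono_on_leD[OF sm]) auto
    then show False using gap gap_pos by simp
  next
    case False
    then have "g (u s) - g (v s) \<le> L * (u s - v s)" using zs by (intro contraction) auto
    also have "\<dots> \<le> L * (u t0 - v t0)" using max[of s] L by (intro mult_left_mono) auto
    also have "\<dots> < u t0 - v t0" using L gap_pos by simp
    finally show False using gap by simp
  qed
qed

lemma contraction_near_point:
  fixes g :: "real \<Rightarrow> real"
  assumes r0: "r0 > 0" and diff: "g differentiable_on ball \<kappa> r0"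
    and cont: "continuous_on (ball \<kappa> r0) (deriv g)" and slope: "deriv g \<kappa> < 1"
  obtains r L where "0 < r" "r < r0" "0 \<le> L" "L < 1"
    "\<And>x y. \<kappa> - r \<le> y \<Longrightarrow> y \<le> x \<Longrightarrow> x \<le> \<kappa> + r \<Longrightarrow> g x - g y \<le> L * (x - y)"
proof -
  define L where "L = max 0 ((1 + deriv g \<kappa>) / 2)"
  have "isCont (deriv g) \<kappa>"
    using continuous_on_eq_continuous_at[OF open_ball, of \<kappa> r0 "deriv g"] cont r0 by simp
  moreover have "(1 - deriv g \<kappa>) / 2 > 0" using slope by simp
  ultimately obtain d where d: "d > 0"
    "\<And>y. dist y \<kappa> < d \<Longrightarrow> dist (deriv g y) (deriv g \<kappa>) < (1 - deriv g \<kappa>) / 2"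
    unfolding continuous_at_eps_delta by blast
  define r where "r = min (d/2) (r0/2)"
  have slope_bound: "deriv g z \<le> L" if "\<bar>z - \<kappa>\<bar> \<le> r" for z
  proof -
    have "\<bar>deriv g z - deriv g \<kappa>\<bar> < (1 - deriv g \<kappa>) / 2"
      using d(2)[of z] that d unfolding r_def by (simp add: dist_real_def)
    then have "deriv g z < deriv g \<kappa> + (1 - deriv g \<kappa>) / 2"
      using abs_ge_self[of "deriv g z - deriv g \<kappa>"] by linarith
    then show ?thesis unfolding L_def by (simp add: field_simps le_max_iff_disj)
  qed
  have "0 < r" "r < r0" using d r0 unfolding r_def by auto
  moreover have "0 \<le> L" "L < 1" using slope unfolding L_def by auto
  moreover have "g x - g y \<le> L * (x - y)" if xy: "\<kappa> - r \<le> y" "y \<le> x" "x \<le> \<kappa> + r" for x y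
  proof (cases "y = x")
    case False
    then have yx: "y < x" using xy by simp
    have "(g has_real_derivative deriv g z) (at z)" if "y \<le> z" "z \<le> x" for z
    proof -
      have "z \<in> ball \<kappa> r0" using that xy r0 unfolding r_def by (auto simp: dist_real_def)
      then show ?thesis
        using diff differentiable_on_eq_differentiable_at[of "ball \<kappa> r0" g]
        by (simp add: DERIV_deriv_iff_real_differentiable)
    qed
    with MVT2[OF yx, of g "deriv g"] obtain z where z: "y < z" "z < x"
      "g x - g y = (x - y) * deriv g z" by blast
    have "deriv g z \<le> L" using z xy by (intro slope_bound) auto
    then show ?thesis using z yx by (simp add: mult_left_mono mult.commute)
  qed simp
  ultimately show ?thesis by (rule that)
qed

lemma hypH_basic:
  assumes "hypH g \<kappa>"
  shows "0 < \<kappa>" "strict_mono_on {0..} g" "g \<kappa> = \<kappa>"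
proof -
  show "0 < \<kappa>" "strict_mono_on {0..} g" using assms unfolding hypH_def by auto
  have "\<kappa> \<in> {x. x \<ge> 0 \<and> g x = x}" using assms unfolding hypH_def by auto
  then show "g \<kappa> = \<kappa>" by simp
qed

lemma hypH_contraction:
  assumes "hypH g \<kappa>"
  obtains r L where "0 < r" "r < \<kappa>" "0 \<le> L" "L < 1"
    "\<And>x y. \<kappa> - r \<le> y \<Longrightarrow> y \<le> x \<Longrightarrow> x \<le> \<kappa> \<Longrightarrow> g x - g y \<le> L * (x - y)"
proof -
  obtain gk r0 where gk: "(g has_real_derivative gk) (at \<kappa> within {0..})" "gk < 1"
    and r0: "0 < r0" "r0 < \<kappa>" "g differentiable_on ball \<kappa> r0"
      "continuous_on (ball \<kappa> r0) (deriv g)"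
    using assms unfolding hypH_def by blast
  have "at \<kappa> within {0..} = at \<kappa>"
    using hypH_basic(1)[OF assms] by (intro at_within_interior) simp
  with gk have "deriv g \<kappa> < 1" by (simp add: DERIV_imp_deriv)
  then obtain r L where "0 < r" "r < r0" "0 \<le> L" "L < 1"
    "\<And>x y. \<kappa> - r \<le> y \<Longrightarrow> y \<le> x \<Longrightarrow> x \<le> \<kappa> + r \<Longrightarrow> g x - g y \<le> L * (x - y)"
    using contraction_near_point[OF r0(1,3,4)] by blast
  with r0(2) show ?thesis by (intro that[of r L]) auto
qed

text \<open>Basic properties of wavefront profiles: they solve the delay equation, are positive,
  increasing (a decreasing positive profile could not tend to \<open>0\<close> at \<open>-\<infinity>\<close>) and bounded by \<open>\<kappa>\<close>.\<close>

lemma wavefront_delay_solution: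
  assumes "wavefront g \<kappa> h c \<phi>"
  shows "delay_solution g c h \<phi>"
  using assms unfolding wavefront_def delay_solution_def by blast

lemma wavefront_basic:
  assumes "wavefront g \<kappa> h c \<phi>"
  shows "0 < \<phi> t" "(\<phi> \<longlongrightarrow> 0) at_bot" "(\<phi> \<longlongrightarrow> \<kappa>) at_top"
  using assms unfolding wavefront_def by auto

lemma wavefront_mono:
  assumes w: "wavefront g \<kappa> h c \<phi>"
  shows "mono \<phi>"
proof (rule ccontr)
  assume "\<not> mono \<phi>"
  then have "antimono \<phi>" using w unfolding wavefront_def by blast
  then have "\<forall>\<^sub>F s in at_bot. \<phi> 0 \<le> \<phi> s"
    unfolding eventually_at_bot_linorder by (intro exI[of _ 0]) (auto simp: antimono_def)
  then have "\<phi> 0 \<le> 0" using tendsto_lowerbound[OF wavefront_basic(2)[OF w]] by simp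
  with wavefront_basic(1)[OF w, of 0] show False by simp
qed

lemma wavefront_le_kappa:
  assumes w: "wavefront g \<kappa> h c \<phi>"
  shows "\<phi> t \<le> \<kappa>"
proof -
  have "\<forall>\<^sub>F s in at_top. \<phi> t \<le> \<phi> s"
    unfolding eventually_at_top_linorder using wavefront_mono[OF w]
    by (intro exI[of _ t]) (auto simp: mono_def)
  then show ?thesis using tendsto_lowerbound[OF wavefront_basic(3)[OF w]] by simp
qed

lemma tendsto_shift_at_top:
  fixes f :: "real \<Rightarrow> 'a::topological_space"
  assumes "(f \<longlongrightarrow> l) at_top"
  shows "((\<lambda>t. f (t + \<tau>)) \<longlongrightarrow> l) at_top"
  by (rule filterlim_compose[OF assms]) real_asymp

lemma tendsto_shift_at_bot:
  fixes f :: "real \<Rightarrow> 'a::topological_space"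
  assumes "(f \<longlongrightarrow> l) at_bot"
  shows "((\<lambda>t. f (t + \<tau>)) \<longlongrightarrow> l) at_bot"
  by (rule filterlim_compose[OF assms]) real_asymp

lemma model_profile_ratio:
  fixes lam mu \<tau> :: real and m n :: nat
  assumes "lam < mu \<or> (lam = mu \<and> m = 1 \<and> n = 0)" "m \<in> {0, 1}" "n \<in> {0, 1}"
  shows "((\<lambda>t. ((- t) ^ n * exp (mu * t)) / ((- (t + \<tau>)) ^ m * exp (lam * (t + \<tau>)))) \<longlongrightarrow> 0) at_bot"
  unfolding filterlim_at_bot_mirror
proof -
  define d where "d = mu - lam"
  have exp_eq: "exp (mu * (- x)) / exp (lam * (- x + \<tau>)) = exp (- d * x) * exp (- lam * \<tau>)" for x
    by (simp add: exp_diff[symmetric] exp_add[symmetric] algebra_simps d_def)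
  have "((\<lambda>x. x ^ n / (x - \<tau>) ^ m * (exp (- d * x) * exp (- lam * \<tau>))) \<longlongrightarrow> 0) at_top"
  proof -
    consider "d > 0" "m = 0" "n = 0" | "d > 0" "m = 0" "n = 1" | "d > 0" "m = 1" "n = 0"
      | "d > 0" "m = 1" "n = 1" | "d = 0" "m = 1" "n = 0"
      using assms unfolding d_def by force
    then show ?thesis by cases (simp, real_asymp)+
  qed
  moreover have "((- (- x)) ^ n * exp (mu * (- x))) / ((- (- x + \<tau>)) ^ m * exp (lam * (- x + \<tau>)))
      = x ^ n / (x - \<tau>) ^ m * (exp (mu * (- x)) / exp (lam * (- x + \<tau>)))" for x
    by simp
  ultimately show "((\<lambda>x. ((- (- x)) ^ n * exp (mu * (- x))) /
      ((- (- x + \<tau>)) ^ m * exp (lam * (- x + \<tau>)))) \<longlongrightarrow> 0) at_top"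
    by (simp only: exp_eq)
qed

lemma profile_ratio_vanishes:
  fixes \<phi> \<psi> :: "real \<Rightarrow> real"
  assumes \<phi>_asym: "((\<lambda>t. \<phi> t / (a * (- t) ^ m * exp (lam * t))) \<longlongrightarrow> 1) at_bot"
    and \<psi>_asym: "((\<lambda>t. \<psi> t / (b * (- t) ^ n * exp (mu * t))) \<longlongrightarrow> 1) at_bot"
    and ab: "a > 0" "b > 0" and pos: "\<And>t. \<phi> t > 0"
    and model: "((\<lambda>t. ((- t) ^ n * exp (mu * t)) / ((- (t + \<tau>)) ^ m * exp (lam * (t + \<tau>)))) \<longlongrightarrow> 0) at_bot"
  shows "((\<lambda>t. \<psi> t / \<phi> (t + \<tau>)) \<longlongrightarrow> 0) at_bot"
proof -
  let ?P = "\<lambda>t. \<phi> (t + \<tau>) / (a * (- (t + \<tau>)) ^ m * exp (lam * (t + \<tau>)))"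
  let ?Q = "\<lambda>t. \<psi> t / (b * (- t) ^ n * exp (mu * t))"
  let ?M = "\<lambda>t. ((- t) ^ n * exp (mu * t)) / ((- (t + \<tau>)) ^ m * exp (lam * (t + \<tau>)))"
  have lim: "((\<lambda>t. ?Q t * (b / a) * ?M t / ?P t) \<longlongrightarrow> 1 * (b / a) * 0 / 1) at_bot"
    by (intro tendsto_intros \<psi>_asym model tendsto_shift_at_bot[OF \<phi>_asym]) simp
  have ev: "eventually (\<lambda>t. ?Q t * (b / a) * ?M t / ?P t = \<psi> t / \<phi> (t + \<tau>)) at_bot"
    unfolding eventually_at_bot_linorder
  proof (intro exI[of _ "- \<bar>\<tau>\<bar> - 1"] allI impI)
    fix t :: real assume t: "t \<le> - \<bar>\<tau>\<bar> - 1"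
    then have "(- t) ^ n \<noteq> 0" "(- (t + \<tau>)) ^ m \<noteq> 0" by auto
    then show "?Q t * (b / a) * ?M t / ?P t = \<psi> t / \<phi> (t + \<tau>)"
      using pos[of "t + \<tau>"] ab by (simp add: field_simps)
  qed
  show ?thesis using tendsto_cong[OF ev] lim by simp
qed

text \<open>The sliding argument for two wavefronts \<open>\<phi>, \<psi>\<close> of the same speed; \<open>\<psi>\<close> plays the role of the
  lower profile, which is compared with translates of \<open>\<phi>\<close>.\<close>

locale wavefront_pair =
  fixes g :: "real \<Rightarrow> real" and \<kappa> h c :: real and \<phi> \<psi> :: "real \<Rightarrow> real"
  assumes hypH: "hypH g \<kappa>" and h_pos: "0 < h" and c_pos: "0 < c"
    and wave_\<phi>: "wavefront g \<kappa> h c \<phi>" and wave_\<psi>: "wavefront g \<kappa> h c \<psi>"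
begin

lemmas \<kappa>_pos = hypH_basic(1)[OF hypH]
  and g_strict_mono = hypH_basic(2)[OF hypH]
  and g_\<kappa> = hypH_basic(3)[OF hypH]
  and \<phi>_pos = wavefront_basic(1)[OF wave_\<phi>] and \<psi>_pos = wavefront_basic(1)[OF wave_\<psi>]
  and \<phi>_bot = wavefront_basic(2)[OF wave_\<phi>]
  and \<phi>_top = wavefront_basic(3)[OF wave_\<phi>] and \<psi>_top = wavefront_basic(3)[OF wave_\<psi>]
  and \<phi>_mono = wavefront_mono[OF wave_\<phi>] and \<psi>_mono = wavefront_mono[OF wave_\<psi>]
  and \<phi>_le = wavefront_le_kappa[OF wave_\<phi>] and \<psi>_le = wavefront_le_kappa[OF wave_\<psi>]
  and \<psi>_solution = wavefront_delay_solution[OF wave_\<psi>]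
  and \<phi>_shift_solution = delay_solution_shift[OF wavefront_delay_solution[OF wave_\<phi>]]
  and \<phi>_continuous = delay_solution_continuous[OF wavefront_delay_solution[OF wave_\<phi>]]
  and \<psi>_continuous = delay_solution_continuous[OF wavefront_delay_solution[OF wave_\<psi>]]

lemma delay_pos: "0 < c * h"
  using c_pos h_pos by simp

text \<open>A wavefront never reaches \<open>\<kappa>\<close>: compare it with the constant solution \<open>\<kappa>\<close>.\<close>

lemma \<psi>_below_\<kappa>: "\<psi> t < \<kappa>"
proof -
  have "eventually (\<lambda>s. \<psi> s < \<kappa>) at_bot"
    using wavefront_basic(2)[OF wave_\<psi>] \<kappa>_pos by (rule order_tendstoD)
  then obtain B where B: "\<And>s. s \<le> B \<Longrightarrow> \<psi> s < \<kappa>" by (auto simp: eventually_at_bot_linorder)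
  show ?thesis
  proof (rule strict_comparison[OF \<psi>_solution delay_solution_fixed_point[of g \<kappa>, OF g_\<kappa>] g_strict_mono delay_pos])
    show "0 \<le> \<psi> s" "0 \<le> \<kappa>" "\<psi> s \<le> \<kappa>" for s
      using \<psi>_pos[of s] \<kappa>_pos \<psi>_le[of s] by simp_all
    show "\<psi> s < \<kappa>" if "s \<le> B" for s using B[OF that] .
  qed
qed

definition shifts :: "real set" where
  "shifts = {\<tau>. \<forall>t. \<psi> t \<le> \<phi> (t + \<tau>)}"

text \<open>Near \<open>+\<infinity>\<close> both profiles lie in the contracting neighbourhood of \<open>\<kappa>\<close>, so the order only has
  to be checked on a left half-line (uniformly for all shifts beyond a given one).\<close>

lemma tail_criterion: "\<exists>T. \<forall>\<tau>\<ge>\<sigma>. (\<forall>t\<le>T. \<psi> t \<le> \<phi> (t + \<tau>)) \<longrightarrow> \<tau> \<in> shifts"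
proof -
  obtain r L where r: "0 < r" "r < \<kappa>" and L: "0 \<le> L" "L < 1"
    and contraction: "\<And>x y. \<kappa> - r \<le> y \<Longrightarrow> y \<le> x \<Longrightarrow> x \<le> \<kappa> \<Longrightarrow> g x - g y \<le> L * (x - y)"
    using hypH_contraction[OF hypH] by blast
  have "eventually (\<lambda>t. \<kappa> - r < \<psi> t) at_top"
    using \<psi>_top r by (intro order_tendstoD) auto
  moreover have "eventually (\<lambda>t. \<kappa> - r < \<phi> (t + \<sigma>)) at_top"
    using tendsto_shift_at_top[OF \<phi>_top] r by (intro order_tendstoD) auto
  ultimately have "eventually (\<lambda>t. \<kappa> - r < \<psi> t \<and> \<kappa> - r < \<phi> (t + \<sigma>)) at_top"
    by (rule eventually_conj)
  then obtain T1 where T1: "\<And>t. t \<ge> T1 \<Longrightarrow> \<kappa> - r < \<psi> t \<and> \<kappa> - r < \<phi> (t + \<sigma>)"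
    by (auto simp: eventually_at_top_linorder)
  define T where "T = T1 + c * h"
  have "\<tau> \<in> shifts" if \<tau>: "\<sigma> \<le> \<tau>" and le: "\<And>t. t \<le> T \<Longrightarrow> \<psi> t \<le> \<phi> (t + \<tau>)" for \<tau>
  proof -
    have zone: "\<kappa> - r \<le> \<psi> t \<and> \<psi> t \<le> \<kappa> \<and> \<kappa> - r \<le> \<phi> (t + \<tau>) \<and> \<phi> (t + \<tau>) \<le> \<kappa>"
      if "t \<ge> T - c * h" for t
    proof -
      have "\<phi> (t + \<sigma>) \<le> \<phi> (t + \<tau>)" using \<tau> by (intro monoD[OF \<phi>_mono]) simp
      then show ?thesis using T1[of t] that \<psi>_le[of t] \<phi>_le[of "t + \<tau>"] unfolding T_def by auto
    qed
    have lim: "((\<lambda>t. \<psi> t - \<phi> (t + \<tau>)) \<longlongrightarrow> 0) at_top"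
      using tendsto_diff[OF \<psi>_top tendsto_shift_at_top[OF \<phi>_top]] by simp
    have "\<psi> t \<le> \<phi> (t + \<tau>)" for t
      using r by (intro tail_comparison[OF \<psi>_solution \<phi>_shift_solution g_strict_mono L _
            contraction zone le lim]) auto
    then show ?thesis unfolding shifts_def by blast
  qed
  then show ?thesis by blast
qed

lemma shifts_nonempty:
  assumes left: "\<And>t. t \<le> B \<Longrightarrow> \<psi> t < \<phi> t"
  shows "shifts \<noteq> {}"
proof -
  obtain T where T: "\<And>\<tau>. 0 \<le> \<tau> \<Longrightarrow> (\<forall>t\<le>T. \<psi> t \<le> \<phi> (t + \<tau>)) \<Longrightarrow> \<tau> \<in> shifts"
    using tail_criterion[of 0] by blast
  have "eventually (\<lambda>s. \<psi> T < \<phi> s) at_top" using \<phi>_top \<psi>_below_\<kappa> by (rule order_tendstoD)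
  then obtain T0 where T0: "\<And>s. s \<ge> T0 \<Longrightarrow> \<psi> T < \<phi> s" by (auto simp: eventually_at_top_linorder)
  define B1 where "B1 = min B T"
  define \<tau>0 where "\<tau>0 = max 0 (T0 - B1)"
  have "\<psi> t \<le> \<phi> (t + \<tau>0)" if "t \<le> T" for t
  proof (cases "t \<le> B1")
    case True
    then have "\<psi> t < \<phi> t" using left unfolding B1_def by simp
    also have "\<phi> t \<le> \<phi> (t + \<tau>0)" by (intro monoD[OF \<phi>_mono]) (simp add: \<tau>0_def)
    finally show ?thesis by simp
  next
    case False
    have "\<psi> t \<le> \<psi> T" using that by (rule monoD[OF \<psi>_mono])
    also have "\<psi> T < \<phi> (B1 + \<tau>0)" by (intro T0) (simp add: \<tau>0_def)
    also have "\<phi> (B1 + \<tau>0) \<le> \<phi> (t + \<tau>0)" using False by (intro monoD[OF \<phi>_mono]) simp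
    finally show ?thesis by simp
  qed
  then have "\<tau>0 \<in> shifts" by (intro T) (simp_all add: \<tau>0_def)
  then show ?thesis by blast
qed

text \<open>Since \<open>\<phi> \<rightarrow> 0\<close> at \<open>-\<infinity>\<close> while \<open>\<psi>(0) > 0\<close>, admissible shifts are bounded below; the set is
  closed by continuity, so it has a least element.\<close>

lemma shifts_bdd_below: "bdd_below shifts"
proof -
  have "eventually (\<lambda>s. \<phi> s < \<psi> 0) at_bot" using \<phi>_bot \<psi>_pos[of 0] by (rule order_tendstoD)
  then obtain B where B: "\<And>s. s \<le> B \<Longrightarrow> \<phi> s < \<psi> 0" by (auto simp: eventually_at_bot_linorder)
  show ?thesis
  proof (rule bdd_belowI)
    fix \<tau> assume "\<tau> \<in> shifts"
    then have "\<psi> 0 \<le> \<phi> (0 + \<tau>)" unfolding shifts_def by blast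
    then show "B \<le> \<tau>" by (cases "\<tau> \<le> B") (use B[of \<tau>] in auto)
  qed
qed

lemma shifts_closed: "closed shifts"
proof -
  have "shifts = (\<Inter>t. {\<tau>. \<psi> t \<le> \<phi> (t + \<tau>)})" unfolding shifts_def by auto
  moreover have "closed {\<tau>. \<psi> t \<le> \<phi> (t + \<tau>)}" for t
    by (intro closed_Collect_le continuous_on_const continuous_on_compose2[OF \<phi>_continuous]
        continuous_intros) auto
  ultimately show ?thesis by auto
qed

text \<open>A translate lying strictly above \<open>\<psi>\<close>, with some room near \<open>-\<infinity>\<close>, can be slid a little to
  the left: near \<open>-\<infinity>\<close> the room is used, on a compact window the positive minimal gap absorbs the
  small translation (uniform continuity), and beyond the window the tail criterion applies.\<close>

lemma slide_further:
  assumes strict: "\<And>t. \<psi> t < \<phi> (t + \<tau>)"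
    and left: "\<And>t. t \<le> B \<Longrightarrow> \<psi> t < \<phi> (t + (\<tau> - 1))"
  obtains \<epsilon> where "0 < \<epsilon>" "\<tau> - \<epsilon> \<in> shifts"
proof -
  obtain T where T: "\<And>\<tau>'. \<tau> - 1 \<le> \<tau>' \<Longrightarrow> (\<forall>t\<le>T. \<psi> t \<le> \<phi> (t + \<tau>')) \<Longrightarrow> \<tau>' \<in> shifts"
    using tail_criterion[of "\<tau> - 1"] by blast
  define B' where "B' = min B T"
  have "continuous_on {B'..T} (\<lambda>t. \<phi> (t + \<tau>) - \<psi> t)"
    by (intro continuous_intros continuous_on_compose2[OF \<phi>_continuous]
        continuous_on_subset[OF \<psi>_continuous]) auto
  moreover have "{B'..T} \<noteq> {}" unfolding B'_def by simp
  ultimately obtain tm where tm: "tm \<in> {B'..T}"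
    and gap_min: "\<And>t. t \<in> {B'..T} \<Longrightarrow> \<phi> (tm + \<tau>) - \<psi> tm \<le> \<phi> (t + \<tau>) - \<psi> t"
    using continuous_attains_inf[OF compact_Icc] by blast
  define \<delta> where "\<delta> = \<phi> (tm + \<tau>) - \<psi> tm"
  have "0 < \<delta>" using strict[of tm] unfolding \<delta>_def by simp
  moreover have "uniformly_continuous_on {B' + \<tau> - 1 .. T + \<tau>} \<phi>"
    by (intro compact_uniformly_continuous continuous_on_subset[OF \<phi>_continuous]) auto
  ultimately obtain \<eta> where \<eta>: "0 < \<eta>" and close: "\<And>x x'. x \<in> {B' + \<tau> - 1 .. T + \<tau>} \<Longrightarrow>
      x' \<in> {B' + \<tau> - 1 .. T + \<tau>} \<Longrightarrow> dist x' x < \<eta> \<Longrightarrow> dist (\<phi> x') (\<phi> x) < \<delta>"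
    unfolding uniformly_continuous_on_def by metis
  define \<epsilon> where "\<epsilon> = min 1 (\<eta> / 2)"
  have \<epsilon>: "0 < \<epsilon>" "\<epsilon> \<le> 1" "\<epsilon> < \<eta>" using \<eta> unfolding \<epsilon>_def by auto
  have "\<psi> t \<le> \<phi> (t + (\<tau> - \<epsilon>))" if "t \<le> T" for t
  proof (cases "t \<le> B'")
    case True
    then have "\<psi> t < \<phi> (t + (\<tau> - 1))" using left unfolding B'_def by simp
    also have "\<dots> \<le> \<phi> (t + (\<tau> - \<epsilon>))" using \<epsilon> by (intro monoD[OF \<phi>_mono]) simp
    finally show ?thesis by simp
  next
    case False
    then have t: "t \<in> {B'..T}" using that by simp
    have "dist (\<phi> (t + (\<tau> - \<epsilon>))) (\<phi> (t + \<tau>)) < \<delta>"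
      using t \<epsilon> by (intro close) (auto simp: dist_real_def)
    moreover have "\<delta> \<le> \<phi> (t + \<tau>) - \<psi> t" using gap_min[OF t] unfolding \<delta>_def .
    ultimately show ?thesis by (simp add: dist_real_def abs_less_iff)
  qed
  then have "\<tau> - \<epsilon> \<in> shifts" using \<epsilon> by (intro T) auto
  with \<epsilon>(1) show ?thesis by (rule that)
qed

text \<open>Hence \<open>\<psi>\<close> cannot decay faster than every translate of \<open>\<phi>\<close> at \<open>-\<infinity>\<close>: the least admissible
  shift would be strictly admissible (strong comparison) and could be decreased (sliding).\<close>

theorem no_faster_decay: "\<not> (\<forall>\<tau>. ((\<lambda>t. \<psi> t / \<phi> (t + \<tau>)) \<longlongrightarrow> 0) at_bot)"
proof
  assume ratio: "\<forall>\<tau>. ((\<lambda>t. \<psi> t / \<phi> (t + \<tau>)) \<longlongrightarrow> 0) at_bot"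
  have below: "\<exists>B. \<forall>t\<le>B. \<psi> t < \<phi> (t + \<tau>)" for \<tau>
  proof -
    have "eventually (\<lambda>t. \<psi> t / \<phi> (t + \<tau>) < 1) at_bot"
      using ratio by (intro order_tendstoD) auto
    then obtain B where "\<And>t. t \<le> B \<Longrightarrow> \<psi> t / \<phi> (t + \<tau>) < 1"
      by (auto simp: eventually_at_bot_linorder)
    then show ?thesis using \<phi>_pos by (auto simp: divide_less_eq)
  qed
  obtain B0 where "\<And>t. t \<le> B0 \<Longrightarrow> \<psi> t < \<phi> t" using below[of 0] by auto
  then have "shifts \<noteq> {}" by (rule shifts_nonempty)
  then have least: "Inf shifts \<in> shifts"
    using closed_contains_Inf shifts_bdd_below shifts_closed by blast
  define \<tau>s where "\<tau>s = Inf shifts"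
  obtain B where B: "\<And>t. t \<le> B \<Longrightarrow> \<psi> t < \<phi> (t + \<tau>s)" using below by blast
  have strict: "\<psi> t < \<phi> (t + \<tau>s)" for t
  proof (rule strict_comparison[OF \<psi>_solution \<phi>_shift_solution g_strict_mono delay_pos])
    show "0 \<le> \<psi> s" "0 \<le> \<phi> (s + \<tau>s)" for s using \<psi>_pos[of s] \<phi>_pos[of "s + \<tau>s"] by simp_all
    show "\<psi> s \<le> \<phi> (s + \<tau>s)" for s using least unfolding shifts_def \<tau>s_def by blast
    show "\<psi> s < \<phi> (s + \<tau>s)" if "s \<le> B" for s using B[OF that] .
  qed
  obtain B' where "\<And>t. t \<le> B' \<Longrightarrow> \<psi> t < \<phi> (t + (\<tau>s - 1))" using below by blast
  with strict obtain \<epsilon> where "0 < \<epsilon>" "\<tau>s - \<epsilon> \<in> shifts" by (rule slide_further)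
  then have "\<tau>s \<le> \<tau>s - \<epsilon>" unfolding \<tau>s_def using shifts_bdd_below by (intro cInf_lower)
  with \<open>0 < \<epsilon>\<close> show False by simp
qed

end

text \<open>Main theorem: if the two profiles had different leading asymptotics, one of them would decay
  faster than every translate of the other, which the sliding argument excludes.\<close>

theorem mainTheorem5:
  fixes g \<phi> \<psi> :: "real \<Rightarrow> real" and \<kappa> h c a b lam mu :: real and m n :: nat
  assumes "h > 0" and "hypH g \<kappa>" and "c > 0"
    and "wavefront g \<kappa> h c \<phi>" and "wavefront g \<kappa> h c \<psi>"
    and "a > 0" and "b > 0" and "lam > 0" and "mu > 0"
    and "m \<in> {0, 1}" and "n \<in> {0, 1}"
    and "((\<lambda>t. \<phi> t / (a * (- t) ^ m * exp (lam * t))) \<longlongrightarrow> 1) at_bot"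
    and "((\<lambda>t. \<psi> t / (b * (- t) ^ n * exp (mu * t))) \<longlongrightarrow> 1) at_bot"
  shows "lam = mu \<and> m = n"
proof (rule ccontr)
  assume differ: "\<not> (lam = mu \<and> m = n)"
  have pair: "wavefront_pair g \<kappa> h c \<phi> \<psi>" and pair': "wavefront_pair g \<kappa> h c \<psi> \<phi>"
    using assms(1-5) by (simp_all add: wavefront_pair_def)
  consider (\<psi>_faster) "lam < mu \<or> (lam = mu \<and> m = 1 \<and> n = 0)"
    | (\<phi>_faster) "mu < lam \<or> (mu = lam \<and> n = 1 \<and> m = 0)"
    using differ assms(10,11) by force
  then show False
  proof cases
    case \<psi>_faster
    then have "\<forall>\<tau>. ((\<lambda>t. \<psi> t / \<phi> (t + \<tau>)) \<longlongrightarrow> 0) at_bot"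
      using profile_ratio_vanishes[OF assms(12,13,6,7) wavefront_basic(1)[OF assms(4)]
          model_profile_ratio[OF _ assms(10,11)]] by blast
    with wavefront_pair.no_faster_decay[OF pair] show False by blast
  next
    case \<phi>_faster
    then have "\<forall>\<tau>. ((\<lambda>t. \<phi> t / \<psi> (t + \<tau>)) \<longlongrightarrow> 0) at_bot"
      using profile_ratio_vanishes[OF assms(13,12,7,6) wavefront_basic(1)[OF assms(5)]
          model_profile_ratio[OF _ assms(11,10)]] by blast
    with wavefront_pair.no_faster_decay[OF pair'] show False by blast
  qed
qed

end
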